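(* Let $f_c=S_0+\sum_{n\ge1}S_nS_0^{\,n+1}$, an element of the Schröder group $G_{\mathcal S}$, and let $g_c$ be its inverse in $G_{\mathcal S}$ for the composition $\circ$. Write $g_c=\eta\, S_0$ with $\eta\in\mathbb{C}\langle\langle S_0,S_1,\dots\rangle\rangle$, and define $\kappa:=\eta^{-1}S_0$, where $\eta^{-1}$ is the multiplicative inverse of $\eta$ in $\mathbb{C}\langle\langle S_0,S_1,\dots\rangle\rangle$. Then: (a) the image of $\kappa$ under the substitution $S_0\mapsto 1$, $S_n\mapsto S_n$ ($n\ge 1$) is the series $K=1+\sum_{n\ge1}K_n$ of $\widehat{\mathbf{Sym}}$; (b) for every $n\ge1$, the sum $\kappa_n$ of all terms of $\kappa$ of weight $n$ is $$\kappa_n=\sum_{t\in \mathrm{PST}_n}(-1)^{i(t)-1}S^t .$$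
   Context: A reduced plane tree is a rooted plane (ordered) tree in which every internal node has at least two children; the one-vertex tree (a single leaf) is allowed. Its degree is its number of leaves, its weight is the degree minus 1, and $i(t)$ denotes the number of internal nodes of $t$. Let $\mathbb{C}\langle\langle S_0,S_1,\dots\rangle\rangle$ be the algebra of formal (possibly infinite) linear combinations of words in noncommuting letters $S_0,S_1,\dots$ (products are well defined since a word has finitely many factorizations); the weight of a word $S_{i_1}\cdots S_{i_r}$ is $i_1+\dots+i_r$. To a reduced plane tree $t$ associate the word $S^t$ obtained by reading the nodes in preorder (root first, then the subtrees from left to right, recursively), writing $S_{k-1}$ for a node with $k$ children (so a leaf is $S_0$); the weight of $S^t$ equals the weight of $t$, and every $S^t$ ends with $S_0$. For trees $t_0$ with $n$ leaves and $t_1,\dots,t_n$, $t_0\circ(t_1,\dots,t_n)$ is the tree obtained by replacing the leaves of $t_0$, from left to right, by $t_1,\dots,t_n$; this is extended multilinearly to series. The Schröder group $G_{\mathcal S}$ is the set of series $p=S_0+\sum_{n\ge2}p_n$ with $p_n$ a finite linear combination of words $S^t$ for trees $t$ with $n$ leaves, with product $p\circ q=q+\sum_{n\ge2}p_n\circ(q,\dots,q)$; it is a group with identity $S_0$. A reduced plane tree with at least two leaves is prime if the rightmost child of its root is a leaf; $\mathrm{PST}_n$ is the set of prime reduced plane trees of weight $n$. $\mathbf{Sym}$ is the free associative algebra over $\mathbb{C}$ on $S_1,S_2,\dots$ ($\deg S_n=n$), $\widehat{\mathbf{Sym}}$ its completion, $S_0=1$, $\sigma_1=\sum_{n\ge0}S_n$,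 and $K_n$ are the unique homogeneous elements of degree $n$ with $K_0=1$ and $\sigma_1=\sum_{n\ge0}K_n\sigma_1^{\,n}$. *)

theory Defs
  imports "HOL-Analysis.Infinite_Sum"
begin

datatype rtree = Node "rtree list"

fun children :: "rtree \<Rightarrow> rtree list" where
  "children (Node ts) = ts"

fun reduced :: "rtree \<Rightarrow> bool" where
  "reduced (Node ts) = (ts = [] \<or> (2 \<le> length ts \<and> (\<forall>t\<in>set ts. reduced t)))"

fun leaves :: "rtree \<Rightarrow> nat" where
  "leaves (Node ts) = (if ts = [] then 1 else sum_list (map leaves ts))"

fun internal :: "rtree \<Rightarrow> nat" where
  "internal (Node ts) = (if ts = [] then 0 else 1 + sum_list (map internal ts))"

text \<open>Preorder word S^t: a node with k children gives the letter S_(k-1),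
  letters S_j are encoded by the natural number j.\<close>
fun tword :: "rtree \<Rightarrow> nat list" where
  "tword (Node ts) = (length ts - 1) # concat (map tword ts)"

text \<open>Grafting: replace the leaves of a tree, from left to right, by the trees
  of a list (consuming the list; returns the unused rest).\<close>
fun gr :: "rtree \<Rightarrow> rtree list \<Rightarrow> rtree \<times> rtree list"
and grl :: "rtree list \<Rightarrow> rtree list \<Rightarrow> rtree list \<times> rtree list" where
  "gr (Node []) ts = (case ts of [] \<Rightarrow> (Node [], []) | t # r \<Rightarrow> (t, r))"
| "gr (Node (c # cs)) ts = (case grl (c # cs) ts of (cs', r) \<Rightarrow> (Node cs', r))"
| "grl [] ts = ([], ts)"
| "grl (c # cs) ts = (case gr c ts of (c', r) \<Rightarrow> (case grl cs r of (cs', r') \<Rightarrow> (c' # cs', r')))"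

definition graft :: "rtree \<Rightarrow> rtree list \<Rightarrow> rtree" where
  "graft t0 ts = fst (gr t0 ts)"

definition prime_tree :: "rtree \<Rightarrow> bool" where
  "prime_tree t \<longleftrightarrow> reduced t \<and> 2 \<le> leaves t \<and> last (children t) = Node []"

definition PST :: "nat \<Rightarrow> rtree set" where
  "PST n = {t. prime_tree t \<and> leaves t - 1 = n}"

text \<open>A series is its coefficient function on words; the letter S_j is j.\<close>
type_synonym ncs = "nat list \<Rightarrow> complex"

definition nc_one :: ncs where
  "nc_one w = (if w = [] then 1 else 0)"

definition letter :: "nat \<Rightarrow> ncs" where
  "letter j w = (if w = [j] then 1 else 0)"

definition nc_mult :: "ncs \<Rightarrow> ncs \<Rightarrow> ncs" where
  "nc_mult a b w = (\<Sum>i\<le>length w. a (take i w) * b (drop i w))"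

fun nc_pow :: "ncs \<Rightarrow> nat \<Rightarrow> ncs" where
  "nc_pow a 0 = nc_one"
| "nc_pow a (Suc n) = nc_mult a (nc_pow a n)"

abbreviation weight :: "nat list \<Rightarrow> nat" where
  "weight w \<equiv> sum_list w"

definition schroder_group :: "ncs set" where
  "schroder_group = {p. p [0] = 1 \<and>
     (\<forall>w. p w \<noteq> 0 \<and> w \<noteq> [0] \<longrightarrow> (\<exists>t. reduced t \<and> 2 \<le> leaves t \<and> w = tword t)) \<and>
     (\<forall>n. finite {t. reduced t \<and> leaves t = n \<and> p (tword t) \<noteq> 0})}"

text \<open>p \<circ> q = q + sum_{n\<ge>2} p_n \<circ> (q,...,q), with the tree composition extended
  multilinearly (q being a combination of tree words S^t).\<close>
definition schroder_comp :: "ncs \<Rightarrow> ncs \<Rightarrow> ncs" where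
  "schroder_comp p q w = q w +
     (\<Sum>(t0, ts) \<in> {(t0, ts). reduced t0 \<and> 2 \<le> leaves t0 \<and> length ts = leaves t0 \<and>
                         (\<forall>t\<in>set ts. reduced t) \<and> tword (graft t0 ts) = w}.
        p (tword t0) * prod_list (map (\<lambda>t. q (tword t)) ts))"

definition f_c :: ncs where
  "f_c w = (if w = [0] \<or> (\<exists>n\<ge>1. w = n # replicate (n + 1) 0) then 1 else 0)"

section \<open>Noncommutative symmetric functions (completed): series in the letters
  S_1, S_2, ... (coefficient 0 on every word containing 0), with S_0 = 1\<close>

definition sigma1 :: ncs where
  "sigma1 w = (if w = [] \<or> (\<exists>n\<ge>1. w = [n]) then 1 else 0)"

text \<open>Kf n = K_n: homogeneous of degree n in Sym, K_0 = 1, and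
  sigma_1 = sum_n K_n sigma_1^n (the coefficient of a word w only receives
  contributions from n \<le> weight w).\<close>
definition is_K_family :: "(nat \<Rightarrow> ncs) \<Rightarrow> bool" where
  "is_K_family Kf \<longleftrightarrow> Kf 0 = nc_one \<and>
     (\<forall>n w. Kf n w \<noteq> 0 \<longrightarrow> weight w = n \<and> 0 \<notin> set w) \<and>
     (\<forall>w. sigma1 w = (\<Sum>n\<le>weight w. nc_mult (Kf n) (nc_pow sigma1 n) w))"

definition K_fam :: "nat \<Rightarrow> ncs" where
  "K_fam = (THE Kf. is_K_family Kf)"

definition K_series :: ncs where
  "K_series w = K_fam (weight w) w"

text \<open>Words in C<<S_0,S_1,...>> that map to the word u of Sym under S_0 \<mapsto> 1.\<close>
definition erase0 :: "nat list \<Rightarrow> nat list" where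
  "erase0 v = filter (\<lambda>x. x \<noteq> 0) v"

end

theory Submission
  imports Defs
begin

text \<open>
  Composing with \<open>f\<^sub>c\<close> shows that the coefficient of \<open>S\<^sup>t\<close> in \<open>g\<close> is \<open>(-1)\<^sup>i\<^sup>(\<^sup>t\<^sup>)\<close>, i.e.
  \<open>g = S\<^sub>0 - \<Sum>\<^sub>m S\<^sub>m g\<^sup>m\<^sup>+\<^sup>1\<close>. Hence \<open>\<eta> = 1 - \<Sum>\<^sub>m S\<^sub>m g\<^sup>m \<eta>\<close>, whose inverse is
  \<open>\<eta>\<^sup>-\<^sup>1 = 1 + \<Sum>\<^sub>m S\<^sub>m g\<^sup>m\<close>; since the words of \<open>g\<^sup>m\<close> are the concatenations of \<open>m\<close> tree
  words, \<open>S\<^sub>m g\<^sup>m S\<^sub>0\<close> is the signed sum over the prime trees whose root has \<open>m + 1\<close>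
  children, which is (b).

  For (a), note that every word of \<open>g\<close>, \<open>\<eta>\<close>, \<open>\<kappa>\<close> has a fixed excess of letters
  \<open>S\<^sub>0\<close> over its weight; on such series the substitution \<open>S\<^sub>0 \<mapsto> 1\<close> is given by finite
  sums and is multiplicative. It sends \<open>\<eta>\<close> to \<open>h\<close> with \<open>h = 1 - \<Sum>\<^sub>m S\<^sub>m h\<^sup>m\<^sup>+\<^sup>1\<close> and
  \<open>\<kappa>\<close> to \<open>k = 1 + \<Sum>\<^sub>m S\<^sub>m h\<^sup>m\<close>. Writing \<open>F(\<sigma>\<^sub>1) = \<Sum>\<^sub>n F\<^sub>n \<sigma>\<^sub>1\<^sup>n\<close> for the homogeneous
  components \<open>F\<^sub>n\<close>, the recursion for \<open>h\<close> gives \<open>h\<^sup>j(\<sigma>\<^sub>1) \<sigma>\<^sub>1\<^sup>j = 1\<close> for all \<open>j\<close>, whence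
  \<open>k(\<sigma>\<^sub>1) = 1 + \<Sum>\<^sub>m S\<^sub>m = \<sigma>\<^sub>1\<close>: the homogeneous components of \<open>k\<close> are the \<open>K\<^sub>n\<close>.
\<close>

lemma sum_eq_single:
  assumes "finite A" "a \<in> A" "\<And>x. x \<in> A \<Longrightarrow> x \<noteq> a \<Longrightarrow> f x = 0"
  shows "sum f A = f a"
proof -
  have "sum f A = f a + sum f (A - {a})" using assms by (simp add: sum.remove)
  also have "sum f (A - {a}) = 0" using assms by (intro sum.neutral) auto
  finally show ?thesis by simp
qed

lemma sum_list_concat: "sum_list (concat xss) = sum_list (map sum_list xss)"
  by (induction xss) auto

lemma prod_list_power_sum_list: "(\<Prod>x\<leftarrow>xs. (a :: 'a :: comm_monoid_mult) ^ f x) = a ^ (\<Sum>x\<leftarrow>xs. f x)"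
  by (induction xs) (auto simp: power_add)

section \<open>Tree words\<close>

lemma tword_ne [simp]: "tword t \<noteq> []"
  by (cases t) auto

lemma tword_prefix_unique:
  assumes "reduced t1" "reduced t2" "tword t1 @ r1 = tword t2 @ r2"
  shows "t1 = t2 \<and> r1 = r2"
  using assms
proof (induction t1 arbitrary: t2 r1 r2)
  case (Node cs1)
  obtain cs2 where t2: "t2 = Node cs2" by (cases t2)
  have children_unique: "cs = cs2 \<and> r1 = r2"
    if "set cs \<subseteq> set cs1" "\<forall>c\<in>set cs2. reduced c" "length cs = length cs2"
      "concat (map tword cs) @ r1 = concat (map tword cs2) @ r2" for cs cs2 r1 r2
    using that
  proof (induction cs arbitrary: cs2)
    case (Cons c cs)
    then obtain c2 cs2' where cs2: "cs2 = c2 # cs2'" by (cases cs2) auto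
    have c: "c \<in> set cs1" "reduced c" using Cons.prems Node.prems(1) by auto
    have "tword c @ (concat (map tword cs) @ r1) = tword c2 @ (concat (map tword cs2') @ r2)"
      using Cons.prems cs2 by simp
    with Node.IH[OF c] Cons.prems cs2
    have "c = c2" "concat (map tword cs) @ r1 = concat (map tword cs2') @ r2" by auto
    with Cons.IH[of cs2'] Cons.prems cs2 show ?case by auto
  qed simp
  have heads: "length cs1 - 1 = length cs2 - 1"
    and tails: "concat (map tword cs1) @ r1 = concat (map tword cs2) @ r2"
    using Node.prems(3) t2 by auto
  have red2: "reduced (Node cs2)" using Node.prems(2) t2 by simp
  have "length cs1 = length cs2"
  proof (cases "cs1 = []")
    case True
    then show ?thesis using heads red2 by (cases cs2) auto
  next
    case False
    then have "2 \<le> length cs1" using Node.prems(1) by auto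
    with heads red2 have "2 \<le> length cs2" by auto
    with \<open>2 \<le> length cs1\<close> heads show ?thesis by simp
  qed
  moreover have "\<forall>c\<in>set cs2. reduced c" using red2 by (cases cs2) auto
  ultimately show ?case using children_unique[OF _ _ _ tails] t2 by auto
qed

lemma tword_inj: "reduced t1 \<Longrightarrow> reduced t2 \<Longrightarrow> tword t1 = tword t2 \<Longrightarrow> t1 = t2"
  using tword_prefix_unique[of t1 t2 "[]" "[]"] by simp

lemma tword_0Cons: "reduced t \<Longrightarrow> tword t = 0 # r \<Longrightarrow> r = []"
  by (cases t) (auto simp: length_Suc_conv)

lemma tword_ConsE:
  assumes "reduced t" "tword t = m # w" "m \<ge> 1"
  obtains cs where "t = Node cs" "length cs = Suc m" "\<forall>c\<in>set cs. reduced c" "w = concat (map tword cs)"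
  using assms by (cases t) (auto split: if_splits)

lemma leaves_ge_1: "leaves t \<ge> 1"
proof (induction t)
  case (Node ts)
  show ?case
  proof (cases ts)
    case (Cons a l)
    then have "leaves a \<le> sum_list (map leaves ts)" by simp
    moreover have "leaves a \<ge> 1" using Node.IH Cons by simp
    ultimately show ?thesis using Cons by simp
  qed simp
qed

lemma tword_zeros_weight:
  "reduced t \<Longrightarrow> count_list (tword t) 0 = leaves t \<and> weight (tword t) + 1 = leaves t"
proof (induction t)
  case (Node cs)
  show ?case
  proof (cases "cs = []")
    case False
    then have "2 \<le> length cs" and red: "\<forall>c\<in>set cs. reduced c" using Node.prems by auto
    have "sum_list (map (\<lambda>c. count_list (tword c) 0) cs) = sum_list (map leaves cs)"
      and "sum_list (map (\<lambda>c. weight (tword c) + 1) cs) = sum_list (map leaves cs)"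
      using Node.IH red by (auto intro!: arg_cong[where f = sum_list])
    moreover have "sum_list (map (\<lambda>c. weight (tword c) + 1) cs)
        = sum_list (map (\<lambda>c. weight (tword c)) cs) + length cs"
      by (induction cs) auto
    ultimately show ?thesis
      using False \<open>2 \<le> length cs\<close> by (simp add: count_list_concat sum_list_concat o_def)
  qed simp
qed

lemma count_zeros_tword: "reduced t \<Longrightarrow> count_list (tword t) 0 = weight (tword t) + 1"
  using tword_zeros_weight by simp

lemma finite_reduced_trees: "finite {t. reduced t \<and> length (tword t) \<le> N}"
proof -
  have "inj_on tword {t. reduced t \<and> length (tword t) \<le> N}"
    by (auto intro: inj_onI tword_inj)
  moreover have "tword ` {t. reduced t \<and> length (tword t) \<le> N} \<subseteq> {v. set v \<subseteq> {..N} \<and> length v \<le> N}"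
  proof
    fix v assume "v \<in> tword ` {t. reduced t \<and> length (tword t) \<le> N}"
    then obtain t where t: "reduced t" "length (tword t) \<le> N" and v: "v = tword t" by blast
    have "set v \<subseteq> {..N}"
    proof
      fix x assume "x \<in> set v"
      then have x: "x \<in> set (tword t)" using v by simp
      have "x \<le> weight (tword t)" using x by (simp add: member_le_sum_list)
      also have "\<dots> < count_list (tword t) 0"
        using count_zeros_tword[OF t(1)] by simp
      also have "\<dots> \<le> length (tword t)"
        by (rule count_le_length)
      finally show "x \<in> {..N}" using t(2) by simp
    qed
    with t v show "v \<in> {v. set v \<subseteq> {..N} \<and> length v \<le> N}" by simp
  qed
  ultimately show ?thesis
    using finite_subset[OF _ finite_lists_length_le[of "{..N}" N]] finite_imageD by blast
qed

section \<open>Noncommutative series\<close>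

definition nc_mult_dep :: "ncs \<Rightarrow> (nat list \<Rightarrow> ncs) \<Rightarrow> ncs" where
  "nc_mult_dep F P w = (\<Sum>i\<le>length w. F (take i w) * P (take i w) (drop i w))"

lemma nc_mult_dep_const: "nc_mult_dep F (\<lambda>_. G) = nc_mult F G"
  by (simp add: fun_eq_iff nc_mult_def nc_mult_dep_def)

lemma nc_mult_dep_mult_right:
  "nc_mult_dep F (\<lambda>p. nc_mult (P p) G) = nc_mult (nc_mult_dep F P) G"
proof
  fix w :: "nat list"
  define n where "n = length w"
  define a where "a j k = F (take j w) * P (take j w) (take k (drop j w)) * G (drop (j + k) w)" for j k
  have "nc_mult_dep F (\<lambda>p. nc_mult (P p) G) w = (\<Sum>j\<le>n. \<Sum>k\<le>n - j. a j k)"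
    unfolding nc_mult_def nc_mult_dep_def n_def
    by (intro sum.cong refl) (simp add: sum_distrib_left a_def mult.assoc add.commute)
  also have "\<dots> = (\<Sum>(j, k)\<in>{(j, k). j + k \<le> n}. a j k)"
  proof -
    have "{(j, k). j + k \<le> n} = Sigma {..n} (\<lambda>j. {..n - j})" by auto
    then show ?thesis by (simp add: sum.Sigma)
  qed
  also have "\<dots> = (\<Sum>k\<le>n. \<Sum>j\<le>k. a j (k - j))"
    by (rule sum.triangle_reindex_eq)
  also have "\<dots> = nc_mult (nc_mult_dep F P) G w"
    unfolding nc_mult_def nc_mult_dep_def n_def
    by (intro sum.cong refl)
      (auto simp: sum_distrib_right min_def a_def take_take drop_take intro!: sum.cong)
  finally show "nc_mult_dep F (\<lambda>p. nc_mult (P p) G) w = nc_mult (nc_mult_dep F P) G w" .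
qed

lemma nc_mult_assoc: "nc_mult (nc_mult a b) c = nc_mult a (nc_mult b c)"
  using nc_mult_dep_mult_right[of a "\<lambda>_. b" c] by (simp add: nc_mult_dep_const)

lemma nc_mult_Nil [simp]: "nc_mult F G [] = F [] * G []"
  by (simp add: nc_mult_def)

lemma nc_mult_Cons: "nc_mult F G (c # v) = F [] * G (c # v) + nc_mult (\<lambda>u. F (c # u)) G v"
  by (simp add: nc_mult_def sum.atMost_Suc_shift del: sum.atMost_Suc)

lemma nc_mult_dep_Nil [simp]: "nc_mult_dep F P [] = F [] * P [] []"
  by (simp add: nc_mult_dep_def)

lemma nc_mult_dep_Cons:
  "nc_mult_dep F P (c # v) = F [] * P [] (c # v) + nc_mult_dep (\<lambda>u. F (c # u)) (\<lambda>u. P (c # u)) v"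
  by (simp add: nc_mult_dep_def sum.atMost_Suc_shift del: sum.atMost_Suc)

lemma nc_mult_dep_cong:
  "(\<And>u. F u = F' u) \<Longrightarrow> (\<And>u. P u = P' u) \<Longrightarrow> nc_mult_dep F P v = nc_mult_dep F' P' v"
  by (simp add: nc_mult_dep_def)

lemma nc_mult_dep_one_left: "nc_mult_dep nc_one P w = P [] w"
proof -
  have "nc_mult_dep nc_one P w = (\<Sum>i\<le>length w. if i = 0 then P [] w else 0)"
    unfolding nc_mult_dep_def nc_one_def by (rule sum.cong) auto
  then show ?thesis by simp
qed

lemma nc_mult_dep_zero_left: "nc_mult_dep (\<lambda>_. 0) P v = 0"
  by (simp add: nc_mult_dep_def)

lemma nc_mult_dep_diff_left:
  "nc_mult_dep (\<lambda>u. F u - G u) P v = nc_mult_dep F P v - nc_mult_dep G P v"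
  by (simp add: nc_mult_dep_def algebra_simps sum_subtractf)

lemma nc_mult_uminus_left: "nc_mult (\<lambda>u. - F u) G v = - nc_mult F G v"
  by (simp add: nc_mult_def sum_negf)

lemma nc_mult_zero_left: "nc_mult (\<lambda>_. 0) G v = 0"
  by (simp add: nc_mult_def)

lemma nc_mult_cong_prefix:
  "(\<And>l. l \<le> length w \<Longrightarrow> F (take l w) = F' (take l w)) \<Longrightarrow> nc_mult F G w = nc_mult F' G w"
  unfolding nc_mult_def by (rule sum.cong) auto

lemma nc_one_mult [simp]: "nc_mult nc_one a = a"
proof
  fix w :: "nat list"
  have "nc_mult nc_one a w = (\<Sum>i\<le>length w. if i = 0 then a w else 0)"
    unfolding nc_mult_def nc_one_def by (rule sum.cong) auto
  then show "nc_mult nc_one a w = a w" by simp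
qed

lemma nc_mult_one [simp]: "nc_mult a nc_one = a"
proof
  fix w :: "nat list"
  have "nc_mult a nc_one w = (\<Sum>i\<le>length w. if i = length w then a w else 0)"
    unfolding nc_mult_def nc_one_def by (rule sum.cong) auto
  then show "nc_mult a nc_one w = a w" by simp
qed

lemma nc_pow_add: "nc_pow a (m + n) = nc_mult (nc_pow a m) (nc_pow a n)"
  by (induction m) (simp_all add: nc_mult_assoc)

lemma nc_pow_Suc': "nc_pow a (Suc n) = nc_mult (nc_pow a n) a"
  using nc_pow_add[of a n 1] by simp

lemma nc_pow_Nil: "F [] = 1 \<Longrightarrow> nc_pow F n [] = 1"
  by (induction n) (simp_all add: nc_one_def)

lemma nc_pow_0Cons:
  assumes "\<And>u. F (0 # u) = 0"
  shows "nc_pow F n (0 # u) = 0"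
proof (induction n arbitrary: u)
  case (Suc n)
  have "(\<lambda>v. F (0 # v)) = (\<lambda>_. 0)" using assms by auto
  then show ?case using Suc by (simp add: nc_mult_Cons nc_mult_zero_left)
qed (simp add: nc_one_def)

lemma nc_mult_letter0_snoc: "nc_mult F (letter 0) (v @ [0]) = F v"
proof -
  have "nc_mult F (letter 0) (v @ [0])
      = F (take (length v) (v @ [0])) * letter 0 (drop (length v) (v @ [0]))"
    unfolding nc_mult_def
  proof (rule sum_eq_single)
    fix i assume i: "i \<in> {..length (v @ [0])}" "i \<noteq> length v"
    have "drop i (v @ [0]) \<noteq> [0]"
    proof
      assume "drop i (v @ [0]) = [0]"
      then have "length (drop i (v @ [0])) = 1" by simp
      with i show False by simp
    qed
    then show "F (take i (v @ [0])) * letter 0 (drop i (v @ [0])) = 0"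
      by (simp add: letter_def)
  qed auto
  then show ?thesis by (simp add: letter_def)
qed

lemma nc_mult_letter0_not_snoc: "(\<And>v. w \<noteq> v @ [0]) \<Longrightarrow> nc_mult F (letter 0) w = 0"
proof -
  assume "\<And>v. w \<noteq> v @ [0]"
  then have "letter 0 (drop i w) = 0" for i
    by (metis append_take_drop_id letter_def)
  then show ?thesis by (simp add: nc_mult_def)
qed

lemma nc_left_inverse_unique:
  assumes "F [] = 1" "nc_mult X F = nc_one" "nc_mult Y F = nc_one"
  shows "X = Y"
proof
  fix v :: "nat list"
  show "X v = Y v"
  proof (induction "length v" arbitrary: v rule: less_induct)
    case less
    have "(\<Sum>i\<le>length v. X (take i v) * F (drop i v)) = (\<Sum>i\<le>length v. Y (take i v) * F (drop i v))"
      using assms(2,3) by (metis nc_mult_def)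
    moreover have "(\<Sum>i<length v. X (take i v) * F (drop i v)) = (\<Sum>i<length v. Y (take i v) * F (drop i v))"
      by (rule sum.cong[OF refl]) (simp add: less)
    ultimately show "X v = Y v" using assms(1) by (simp add: lessThan_Suc_atMost[symmetric])
  qed
qed

section \<open>Composition with \<open>f\<^sub>c\<close>\<close>

abbreviation num_nodes :: "rtree \<Rightarrow> nat" where
  "num_nodes t \<equiv> length (tword t)"

lemma length_graft:
  "leaves t \<le> length ts \<longrightarrow> snd (gr t ts) = drop (leaves t) ts \<and>
     num_nodes (fst (gr t ts)) + leaves t = num_nodes t + sum_list (map num_nodes (take (leaves t) ts))"
  "sum_list (map leaves cs) \<le> length ts \<longrightarrow> snd (grl cs ts) = drop (sum_list (map leaves cs)) ts \<and>
     sum_list (map num_nodes (fst (grl cs ts))) + sum_list (map leaves cs) =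
       sum_list (map num_nodes cs) + sum_list (map num_nodes (take (sum_list (map leaves cs)) ts))"
proof (induction t ts and cs ts rule: gr_grl.induct)
  case (1 ts)
  then show ?case by (cases ts) auto
next
  case (2 c cs ts)
  then show ?case by (auto simp: length_concat o_def split: prod.split)
next
  case (4 c cs ts)
  obtain c' r where e1: "gr c ts = (c', r)" by fastforce
  obtain cs' r' where e2: "grl cs r = (cs', r')" by fastforce
  show ?case
  proof
    assume len: "sum_list (map leaves (c # cs)) \<le> length ts"
    have r: "r = drop (leaves c) ts"
      "num_nodes c' + leaves c = num_nodes c + sum_list (map num_nodes (take (leaves c) ts))"
      using 4(1) len e1 by auto
    have r': "r' = drop (sum_list (map leaves cs)) r"
      "sum_list (map num_nodes cs') + sum_list (map leaves cs)
        = sum_list (map num_nodes cs) + sum_list (map num_nodes (take (sum_list (map leaves cs)) r))"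
      using 4(2)[OF e1[symmetric]] len r e2 by auto
    have "take (leaves c + sum_list (map leaves cs)) ts
        = take (leaves c) ts @ take (sum_list (map leaves cs)) r"
      using r by (simp add: take_add)
    with e1 e2 r r' show "snd (grl (c # cs) ts) = drop (sum_list (map leaves (c # cs))) ts \<and>
      sum_list (map num_nodes (fst (grl (c # cs) ts))) + sum_list (map leaves (c # cs)) =
       sum_list (map num_nodes (c # cs)) + sum_list (map num_nodes (take (sum_list (map leaves (c # cs))) ts))"
      by (simp add: add.commute add.left_commute)
  qed
qed simp

abbreviation corolla :: "nat \<Rightarrow> rtree" where
  "corolla k \<equiv> Node (replicate k (Node []))"

lemma grl_leaves: "k \<le> length ts \<Longrightarrow> grl (replicate k (Node [])) ts = (take k ts, drop k ts)"
proof (induction k arbitrary: ts)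
  case (Suc k)
  then obtain x r where "ts = x # r" by (cases ts) auto
  with Suc show ?case by simp
qed simp

lemma graft_corolla: "ts \<noteq> [] \<Longrightarrow> graft (corolla (length ts)) ts = Node ts"
  using grl_leaves[of "length ts" ts] by (cases "length ts") (auto simp: graft_def)

lemma tword_corolla: "tword (corolla k) = (k - 1) # replicate k 0"
  by (simp add: concat_replicate_single)

lemma f_c_tword_nonzero:
  assumes "reduced t" "2 \<le> leaves t" "f_c (tword t) \<noteq> 0"
  shows "\<exists>n\<ge>1. t = corolla (n + 1)"
proof -
  have "tword t \<noteq> tword (Node [])"
    using assms(1,2) tword_inj[OF assms(1), of "Node []"] by auto
  with assms(3) obtain n where n: "n \<ge> 1" "tword t = tword (corolla (n + 1))"
    unfolding f_c_def by (auto simp: tword_corolla split: if_splits)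
  then have "t = corolla (n + 1)" using tword_inj[OF assms(1)] by simp
  with n(1) show ?thesis by blast
qed

lemma length_le_sum_num_nodes: "length ts \<le> sum_list (map num_nodes ts)"
  using sum_list_mono[of ts "\<lambda>_. 1::nat" num_nodes] by (simp add: Suc_le_eq sum_list_triv)

lemma sum_num_nodes_ge: "t \<in> set ts \<Longrightarrow> num_nodes t + (length ts - 1) \<le> sum_list (map num_nodes ts)"
proof (induction ts)
  case (Cons a ts)
  have "length ts \<le> sum_list (map num_nodes ts)" by (rule length_le_sum_num_nodes)
  moreover have "num_nodes a \<ge> 1" by (simp add: Suc_le_eq)
  moreover have "t \<noteq> a \<Longrightarrow> ts \<noteq> []" using Cons.prems by auto
  ultimately show ?case using Cons by (cases "t = a") auto
qed simp

abbreviation graft_decompositions :: "nat list \<Rightarrow> (rtree \<times> rtree list) set" where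
  "graft_decompositions w \<equiv> {(t0, ts). reduced t0 \<and> 2 \<le> leaves t0 \<and> length ts = leaves t0 \<and>
                         (\<forall>t\<in>set ts. reduced t) \<and> tword (graft t0 ts) = w}"

lemma finite_graft_decompositions: "finite (graft_decompositions w)"
proof -
  define T where "T = {t. reduced t \<and> num_nodes t \<le> length w}"
  have "graft_decompositions w \<subseteq> T \<times> {ts. set ts \<subseteq> T \<and> length ts \<le> length w}"
  proof
    fix p assume "p \<in> graft_decompositions w"
    then obtain t0 ts where p: "p = (t0, ts)" and t0: "reduced t0" "2 \<le> leaves t0"
      and ts: "length ts = leaves t0" "\<forall>t\<in>set ts. reduced t" and w: "w = tword (graft t0 ts)"
      by auto
    have nodes: "length w + length ts = num_nodes t0 + sum_list (map num_nodes ts)"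
      using length_graft(1)[of t0 ts] ts(1) w by (simp add: graft_def)
    have "length ts \<le> num_nodes t0"
      using tword_zeros_weight[OF t0(1)] count_le_length ts(1) by metis
    moreover have "length ts \<le> sum_list (map num_nodes ts)" by (rule length_le_sum_num_nodes)
    moreover have "num_nodes t \<le> length w" if "t \<in> set ts" for t
      using sum_num_nodes_ge[OF that] nodes calculation(1) t0(2) ts(1) by simp
    ultimately show "p \<in> T \<times> {ts. set ts \<subseteq> T \<and> length ts \<le> length w}"
      using p nodes t0(1) ts(2) by (auto simp: T_def)
  qed
  moreover have "finite T" unfolding T_def by (rule finite_reduced_trees)
  ultimately show ?thesis
    using finite_lists_length_le finite_subset by blast
qed

text \<open>At a tree word only the decomposition through the corolla at the root contributes.\<close>

lemma schroder_comp_f_c_tword: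
  assumes red: "reduced (Node cs)" and cs: "2 \<le> length cs"
  shows "schroder_comp f_c q (tword (Node cs)) = q (tword (Node cs)) + (\<Prod>c\<leftarrow>cs. q (tword c))"
proof -
  let ?w = "tword (Node cs)"
  let ?term = "\<lambda>(t0, ts). f_c (tword t0) * (\<Prod>t\<leftarrow>ts. q (tword t))"
  have mem: "(corolla (length cs), cs) \<in> graft_decompositions ?w"
    using red cs graft_corolla[of cs] by (auto simp: sum_list_replicate)
  have "sum ?term (graft_decompositions ?w) = ?term (corolla (length cs), cs)"
  proof (rule sum_eq_single[OF finite_graft_decompositions mem])
    fix p assume p: "p \<in> graft_decompositions ?w" "p \<noteq> (corolla (length cs), cs)"
    obtain t0 ts where p_eq: "p = (t0, ts)" by fastforce
    show "?term p = 0"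
    proof (rule ccontr)
      assume nz: "?term p \<noteq> 0"
      have t0: "reduced t0" "2 \<le> leaves t0" and ts: "length ts = leaves t0" "\<forall>t\<in>set ts. reduced t"
        and graft: "tword (graft t0 ts) = ?w"
        using p(1) p_eq by auto
      have "f_c (tword t0) \<noteq> 0" using nz p_eq by auto
      then obtain n where n: "n \<ge> 1" "t0 = corolla (n + 1)" using f_c_tword_nonzero t0 by blast
      then have len: "length ts = n + 1" using ts(1) by (simp add: sum_list_replicate)
      then have "ts \<noteq> []" by auto
      then have "graft t0 ts = Node ts" using graft_corolla[of ts] n(2) len by simp
      with graft have "tword (Node ts) = ?w" by simp
      moreover have "reduced (Node ts)" using ts(2) len n(1) by simp
      ultimately have "ts = cs" using tword_inj[OF _ red] by blast
      with p(2) p_eq n(2) len show False by simp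
    qed
  qed
  moreover have "f_c (tword (corolla (length cs))) = 1"
  proof -
    obtain m where "length cs = Suc m" "m \<ge> 1" using cs by (cases "length cs") auto
    then show ?thesis by (auto simp: f_c_def tword_corolla)
  qed
  ultimately show ?thesis by (simp add: schroder_comp_def)
qed

section \<open>The inverse of \<open>f\<^sub>c\<close>\<close>

definition tree_supported :: "ncs \<Rightarrow> bool" where
  "tree_supported F \<longleftrightarrow> (\<forall>w. F w \<noteq> 0 \<longrightarrow> (\<exists>t. reduced t \<and> w = tword t))"

lemma nc_pow_tree_supported_concat:
  assumes F: "tree_supported F" and red: "\<forall>c\<in>set cs. reduced c"
  shows "nc_pow F (length cs) (concat (map tword cs)) = (\<Prod>c\<leftarrow>cs. F (tword c))"
  using red
proof (induction cs)
  case (Cons c cs)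
  let ?w = "concat (map tword (c # cs))"
  have "nc_pow F (length (c # cs)) ?w
      = F (take (length (tword c)) ?w) * nc_pow F (length cs) (drop (length (tword c)) ?w)"
    unfolding nc_pow.simps length_Cons nc_mult_def
  proof (rule sum_eq_single)
    fix i assume i: "i \<in> {..length ?w}" "i \<noteq> length (tword c)"
    show "F (take i ?w) * nc_pow F (length cs) (drop i ?w) = 0"
    proof (cases "F (take i ?w) = 0")
      case False
      then obtain t where t: "reduced t" "take i ?w = tword t"
        using F by (auto simp: tree_supported_def)
      then have "tword t @ drop i ?w = tword c @ concat (map tword cs)"
        by (metis append_take_drop_id concat.simps(2) list.simps(9))
      then have "t = c" using tword_prefix_unique[OF t(1)] Cons.prems by auto
      then have "length (take i ?w) = length (tword c)" using t(2) by simp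
      with i show ?thesis by simp
    qed simp
  qed auto
  then show ?case using Cons by simp
qed (simp add: nc_one_def)

lemma nc_pow_tree_supported_eq_0:
  assumes F: "tree_supported F"
    and not_concat: "\<nexists>cs. length cs = k \<and> (\<forall>c\<in>set cs. reduced c) \<and> w = concat (map tword cs)"
  shows "nc_pow F k w = 0"
  using not_concat
proof (induction k arbitrary: w)
  case 0
  then have "w \<noteq> []" by force
  then show ?case by (simp add: nc_one_def)
next
  case (Suc k)
  have "F (take i w) * nc_pow F k (drop i w) = 0" for i
  proof (rule ccontr)
    assume nz: "F (take i w) * nc_pow F k (drop i w) \<noteq> 0"
    then obtain t where t: "reduced t" "take i w = tword t"
      using F by (auto simp: tree_supported_def)
    from nz Suc.IH obtain cs where cs: "length cs = k" "\<forall>c\<in>set cs. reduced c"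
      "drop i w = concat (map tword cs)"
      by force
    have "w = concat (map tword (t # cs))" using t(2) cs(3) append_take_drop_id[of i w] by simp
    with t cs Suc.prems show False by (metis length_Cons set_ConsD)
  qed
  then show ?case unfolding nc_pow.simps nc_mult_def by (intro sum.neutral ballI)
qed

locale fc_inverse =
  fixes g :: ncs
  assumes g_group: "g \<in> schroder_group"
    and f_c_comp_g: "schroder_comp f_c g = letter 0"
begin

lemma tree_supported_g: "tree_supported g"
  unfolding tree_supported_def
proof (intro allI impI)
  fix w assume "g w \<noteq> 0"
  then show "\<exists>t. reduced t \<and> w = tword t"
    using g_group by (cases "w = [0]") (auto simp: schroder_group_def intro: exI[of _ "Node []"])
qed

lemma g_tword: "reduced t \<Longrightarrow> g (tword t) = (-1) ^ internal t"
proof (induction t)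
  case (Node cs)
  show ?case
  proof (cases "cs = []")
    case True
    then show ?thesis using g_group by (simp add: schroder_group_def)
  next
    case False
    with Node.prems have cs: "2 \<le> length cs" and red: "\<forall>c\<in>set cs. reduced c" by auto
    have "tword (Node cs) \<noteq> [0]" using cs by (cases cs) auto
    then have "schroder_comp f_c g (tword (Node cs)) = 0"
      using f_c_comp_g by (simp add: letter_def)
    then have "g (tword (Node cs)) = - (\<Prod>c\<leftarrow>cs. g (tword c))"
      using schroder_comp_f_c_tword[OF Node.prems cs] by (simp add: add_eq_0_iff)
    also have "(\<Prod>c\<leftarrow>cs. g (tword c)) = (\<Prod>c\<leftarrow>cs. (-1) ^ internal c)"
      using Node.IH red by (intro arg_cong[where f = prod_list] map_cong) auto
    finally show ?thesis using False by (simp add: prod_list_power_sum_list)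
  qed
qed

lemma nc_pow_g_concat:
  "\<forall>c\<in>set cs. reduced c \<Longrightarrow> nc_pow g (length cs) (concat (map tword cs)) = (-1) ^ (\<Sum>c\<leftarrow>cs. internal c)"
  using nc_pow_tree_supported_concat[OF tree_supported_g] g_tword
  by (simp add: prod_list_power_sum_list[symmetric] cong: map_cong)

lemma g_Cons:
  assumes m: "m \<ge> 1"
  shows "g (m # w) = - nc_pow g (Suc m) w"
proof (cases "\<exists>cs. length cs = Suc m \<and> (\<forall>c\<in>set cs. reduced c) \<and> w = concat (map tword cs)")
  case True
  then obtain cs where cs: "length cs = Suc m" "\<forall>c\<in>set cs. reduced c" "w = concat (map tword cs)"
    by blast
  then have "g (m # w) = g (tword (Node cs))" by simp
  also have "\<dots> = - ((-1) ^ (\<Sum>c\<leftarrow>cs. internal c))"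
    using g_tword[of "Node cs"] cs m by (cases cs) auto
  finally show ?thesis using nc_pow_g_concat[OF cs(2)] cs(1,3) by simp
next
  case False
  have "g (m # w) = 0"
  proof (rule ccontr)
    assume "g (m # w) \<noteq> 0"
    then obtain t where "reduced t" "tword t = m # w"
      using tree_supported_g by (force simp: tree_supported_def)
    from tword_ConsE[OF this m] False show False by metis
  qed
  moreover have "nc_pow g (Suc m) w = 0"
    using False by (intro nc_pow_tree_supported_eq_0[OF tree_supported_g])
  ultimately show ?thesis by simp
qed

end

section \<open>Prime trees\<close>

definition prime_tree_series :: ncs where
  "prime_tree_series w =
     (if w = [0] then 1 else 0) + (\<Sum>t | prime_tree t \<and> tword t = w. (-1) ^ (internal t - 1))"

lemma prime_treeE:
  assumes "prime_tree t"
  obtains cs where "t = Node (cs @ [Node []])" "cs \<noteq> []" "\<forall>c\<in>set cs. reduced c"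
proof -
  obtain ts where t: "t = Node ts" by (cases t)
  with assms have ts: "ts \<noteq> []" "last ts = Node []" "2 \<le> length ts" "\<forall>c\<in>set ts. reduced c"
    by (auto simp: prime_tree_def)
  then have "ts = butlast ts @ [Node []]" by (metis append_butlast_last_id)
  moreover have "butlast ts \<noteq> []" using ts(3) by (cases ts rule: rev_cases) auto
  moreover have "\<forall>c\<in>set (butlast ts). reduced c" using ts(4) by (auto dest: in_set_butlastD)
  ultimately show ?thesis using t that by metis
qed

lemma prime_tree_Node_snoc:
  assumes "cs \<noteq> []" "\<forall>c\<in>set cs. reduced c"
  shows "prime_tree (Node (cs @ [Node []]))"
proof -
  obtain c cs' where "cs = c # cs'" using assms(1) by (cases cs) auto
  moreover have "leaves c \<ge> 1" by (rule leaves_ge_1)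
  ultimately show ?thesis using assms by (simp add: prime_tree_def)
qed

lemma prime_tree_series_single: "prime_tree_series [0] = 1"
proof -
  have none: "{t. prime_tree t \<and> tword t = [0]} = {}"
  proof (rule equals0I)
    fix t assume "t \<in> {t. prime_tree t \<and> tword t = [0]}"
    then obtain cs where "tword (Node (cs @ [Node []])) = [0]" by (auto elim: prime_treeE)
    then show False by simp
  qed
  show ?thesis unfolding prime_tree_series_def none by simp
qed

lemma prime_tree_series_0Cons: "prime_tree_series (0 # v @ [0]) = 0"
proof -
  have none: "{t. prime_tree t \<and> tword t = 0 # v @ [0]} = {}"
  proof (rule equals0I)
    fix t assume "t \<in> {t. prime_tree t \<and> tword t = 0 # v @ [0]}"
    then obtain cs where "cs \<noteq> []" "tword (Node (cs @ [Node []])) = 0 # v @ [0]"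
      by (auto elim: prime_treeE)
    then show False by simp
  qed
  show ?thesis unfolding prime_tree_series_def none by simp
qed

lemma prime_tree_series_not_snoc: "(\<And>v. w \<noteq> v @ [0]) \<Longrightarrow> prime_tree_series w = 0"
proof -
  assume not_snoc: "\<And>v. w \<noteq> v @ [0]"
  have none: "{t. prime_tree t \<and> tword t = w} = {}"
  proof (rule equals0I)
    fix t assume "t \<in> {t. prime_tree t \<and> tword t = w}"
    then obtain cs where "tword (Node (cs @ [Node []])) = w" by (auto elim: prime_treeE)
    then have "w = (length cs # concat (map tword cs)) @ [0]" by simp
    with not_snoc show False by blast
  qed
  have "w \<noteq> [0]" using not_snoc[of "[]"] by simp
  then show ?thesis unfolding prime_tree_series_def none by simp
qed

lemma length_le_zeros_weight: "length v \<le> count_list v 0 + weight v"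
  by (induction v) auto

lemma finite_PST: "finite (PST n)"
proof (rule finite_subset[OF _ finite_reduced_trees[of "2 * n + 1"]])
  show "PST n \<subseteq> {t. reduced t \<and> length (tword t) \<le> 2 * n + 1}"
  proof
    fix t assume "t \<in> PST n"
    then have t: "reduced t" "2 \<le> leaves t" "leaves t - 1 = n"
      by (auto simp: PST_def prime_tree_def)
    moreover have "count_list (tword t) 0 = leaves t" "weight (tword t) + 1 = leaves t"
      using tword_zeros_weight[OF t(1)] by auto
    ultimately show "t \<in> {t. reduced t \<and> length (tword t) \<le> 2 * n + 1}"
      using length_le_zeros_weight[of "tword t"] by simp
  qed
qed

context fc_inverse
begin

lemma prime_tree_series_Cons:
  assumes m: "m \<ge> 1"
  shows "prime_tree_series (m # v @ [0]) = nc_pow g m v"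
proof (cases "\<exists>cs. length cs = m \<and> (\<forall>c\<in>set cs. reduced c) \<and> v = concat (map tword cs)")
  case True
  then obtain cs where cs: "length cs = m" "\<forall>c\<in>set cs. reduced c" "v = concat (map tword cs)"
    by blast
  define t where "t = Node (cs @ [Node []])"
  have t_word: "tword t = m # v @ [0]" using cs by (simp add: t_def)
  have "cs \<noteq> []" using cs(1) m by auto
  then have "prime_tree t" using prime_tree_Node_snoc cs(2) by (simp add: t_def)
  then have "reduced t" by (simp add: prime_tree_def)
  have "{t'. prime_tree t' \<and> tword t' = m # v @ [0]} = {t}"
  proof (intro set_eqI iffI)
    fix t' assume "t' \<in> {t'. prime_tree t' \<and> tword t' = m # v @ [0]}"
    then have "reduced t'" "tword t' = tword t" using t_word by (auto simp: prime_tree_def)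
    then show "t' \<in> {t}" using tword_inj[OF _ \<open>reduced t\<close>] by simp
  qed (use \<open>prime_tree t\<close> t_word in simp)
  then have "prime_tree_series (m # v @ [0]) = (-1) ^ (internal t - 1)"
    by (simp add: prime_tree_series_def)
  also have "\<dots> = nc_pow g m v"
    using nc_pow_g_concat[OF cs(2)] cs(1,3) by (simp add: t_def)
  finally show ?thesis .
next
  case False
  have none: "{t. prime_tree t \<and> tword t = m # v @ [0]} = {}"
  proof (rule ccontr)
    assume "{t. prime_tree t \<and> tword t = m # v @ [0]} \<noteq> {}"
    then obtain cs where cs: "\<forall>c\<in>set cs. reduced c" "tword (Node (cs @ [Node []])) = m # v @ [0]"
      by (auto elim: prime_treeE)
    then have "length cs = m" "v = concat (map tword cs)" by auto
    with cs(1) False show False by blast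
  qed
  have "nc_pow g m v = 0"
    using False by (intro nc_pow_tree_supported_eq_0[OF tree_supported_g])
  with m show ?thesis unfolding prime_tree_series_def none by simp
qed

end

locale fc_inverse_kappa = fc_inverse +
  fixes eta eta_inv kappa :: ncs
  assumes g_eq: "g = nc_mult eta (letter 0)"
    and eta_inv_mult: "nc_mult eta_inv eta = nc_one"
    and kappa_eq: "kappa = nc_mult eta_inv (letter 0)"
begin

lemma eta_snoc: "eta v = g (v @ [0])"
  using g_eq nc_mult_letter0_snoc by simp

lemma eta_Nil: "eta [] = 1"
  using eta_snoc g_tword[of "Node []"] by simp

lemma eta_0Cons: "eta (0 # v) = 0"
proof (rule ccontr)
  assume "eta (0 # v) \<noteq> 0"
  then obtain t where "reduced t" "tword t = 0 # v @ [0]"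
    using eta_snoc tree_supported_g by (force simp: tree_supported_def)
  then show False using tword_0Cons by fastforce
qed

lemma eta_Cons: "m \<ge> 1 \<Longrightarrow> eta (m # v) = - nc_mult (nc_pow g m) eta v"
proof -
  assume m: "m \<ge> 1"
  have "nc_pow g (Suc m) = nc_mult (nc_pow g m) (nc_mult eta (letter 0))"
    by (simp only: nc_pow_Suc' g_eq)
  also have "\<dots> = nc_mult (nc_mult (nc_pow g m) eta) (letter 0)"
    by (rule nc_mult_assoc[symmetric])
  finally have "nc_pow g (Suc m) = nc_mult (nc_mult (nc_pow g m) eta) (letter 0)" .
  then show ?thesis
    using eta_snoc g_Cons[OF m] by (simp add: nc_mult_letter0_snoc)
qed

lemma eta_inv_eq: "eta_inv = (\<lambda>w. case w of [] \<Rightarrow> 1 | m # v \<Rightarrow> if m = 0 then 0 else nc_pow g m v)"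
  (is "_ = ?B")
proof (rule nc_left_inverse_unique[OF eta_Nil eta_inv_mult])
  show "nc_mult ?B eta = nc_one"
  proof
    fix w :: "nat list"
    show "nc_mult ?B eta w = nc_one w"
    proof (cases w)
      case (Cons c v)
      show ?thesis
      proof (cases "c = 0")
        case True
        then show ?thesis
          using Cons by (simp add: nc_mult_Cons eta_0Cons nc_mult_zero_left nc_one_def)
      next
        case False
        have "(\<lambda>u. ?B (c # u)) = nc_pow g c" using False by auto
        then show ?thesis
          using Cons False by (simp add: nc_mult_Cons eta_Cons nc_one_def)
      qed
    qed (simp add: eta_Nil nc_one_def)
  qed
qed

lemma eta_inv_0Cons: "eta_inv (0 # v) = 0"
  by (simp add: eta_inv_eq)

lemma eta_inv_Cons: "m \<ge> 1 \<Longrightarrow> eta_inv (m # v) = nc_pow g m v"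
  by (simp add: eta_inv_eq)

lemma kappa_eq_prime_tree_series: "kappa = prime_tree_series"
proof
  fix w :: "nat list"
  show "kappa w = prime_tree_series w"
  proof (cases "\<exists>v. w = v @ [0]")
    case True
    then obtain v where w: "w = v @ [0]" by blast
    then have "kappa w = eta_inv v" by (simp add: kappa_eq nc_mult_letter0_snoc)
    also have "\<dots> = prime_tree_series w"
      using w by (cases v) (auto simp: eta_inv_eq prime_tree_series_single prime_tree_series_0Cons
          prime_tree_series_Cons)
    finally show ?thesis .
  next
    case False
    then show ?thesis
      by (metis kappa_eq nc_mult_letter0_not_snoc prime_tree_series_not_snoc)
  qed
qed

lemma kappa_weight:
  assumes "n \<ge> 1" "weight w = n"
  shows "kappa w = (\<Sum>t\<in>PST n. if tword t = w then (-1) ^ (internal t - 1) else 0)"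
proof -
  have "{t \<in> PST n. tword t = w} = {t. prime_tree t \<and> tword t = w}"
  proof (intro set_eqI iffI)
    fix t assume "t \<in> {t. prime_tree t \<and> tword t = w}"
    then have t: "prime_tree t" "tword t = w" by auto
    then have "weight (tword t) + 1 = leaves t"
      using tword_zeros_weight[of t] by (simp add: prime_tree_def)
    with t assms(2) show "t \<in> {t \<in> PST n. tword t = w}" by (auto simp: PST_def)
  qed (auto simp: PST_def)
  then have "(\<Sum>t\<in>PST n. if tword t = w then (-1) ^ (internal t - 1) else 0)
      = (\<Sum>t | prime_tree t \<and> tword t = w. (-1) ^ (internal t - 1) :: complex)"
    by (simp only: sum.inter_filter[OF finite_PST, symmetric])
  moreover have "w \<noteq> [0]" using assms by auto
  then have "kappa w = (\<Sum>t | prime_tree t \<and> tword t = w. (-1) ^ (internal t - 1))"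
    by (simp add: kappa_eq_prime_tree_series prime_tree_series_def)
  ultimately show ?thesis by simp
qed

end

section \<open>The substitution \<open>S\<^sub>0 \<mapsto> 1\<close>\<close>

text \<open>If every word in the support of \<open>F\<close> has exactly \<open>c\<close> more letters \<open>S\<^sub>0\<close> than its weight,
  the words sent to \<open>u\<close> by \<open>S\<^sub>0 \<mapsto> 1\<close> on which \<open>F\<close> does not vanish lie in the finite set
  \<open>zero_fibre c u\<close>, so \<open>erase_zeros c F\<close> is the image of \<open>F\<close> under the substitution.\<close>

definition zero_excess :: "nat \<Rightarrow> ncs \<Rightarrow> bool" where
  "zero_excess c F \<longleftrightarrow> (\<forall>v. F v \<noteq> 0 \<longrightarrow> count_list v 0 = weight v + c)"

definition zero_fibre :: "nat \<Rightarrow> nat list \<Rightarrow> nat list set" where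
  "zero_fibre c u = {v. erase0 v = u \<and> count_list v 0 = weight u + c}"

definition erase_zeros :: "nat \<Rightarrow> ncs \<Rightarrow> ncs" where
  "erase_zeros c F u = (\<Sum>v\<in>zero_fibre c u. F v)"

lemma erase0_Nil [simp]: "erase0 [] = []"
  by (simp add: erase0_def)

lemma erase0_Cons: "erase0 (x # v) = (if x = 0 then erase0 v else x # erase0 v)"
  by (simp add: erase0_def)

lemma erase0_append [simp]: "erase0 (a @ b) = erase0 a @ erase0 b"
  by (simp add: erase0_def)

lemma weight_erase0 [simp]: "weight (erase0 v) = weight v"
  by (induction v) (auto simp: erase0_def)

lemma zero_notin_erase0: "0 \<notin> set (erase0 v)"
  by (simp add: erase0_def)

lemma erase0_eq_Nil: "erase0 v = [] \<Longrightarrow> count_list v 0 = n \<Longrightarrow> v = replicate n 0"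
  by (induction v arbitrary: n) (auto simp: erase0_def split: if_splits)

lemma finite_zero_fibre: "finite (zero_fibre c u)"
proof (rule finite_subset)
  let ?N = "length u + weight u + c"
  show "zero_fibre c u \<subseteq> {v. set v \<subseteq> {..?N} \<and> length v \<le> ?N}"
  proof
    fix v assume "v \<in> zero_fibre c u"
    then have v: "erase0 v = u" "count_list v 0 = weight u + c" by (auto simp: zero_fibre_def)
    have "length v = count_list v 0 + length (erase0 v)"
      by (induction v) (auto simp: erase0_def)
    then have "length v \<le> ?N" using v by simp
    moreover have "x \<le> ?N" if "x \<in> set v" for x
      using member_le_sum_list[OF that] v(1) weight_erase0[of v] by simp
    ultimately show "v \<in> {v. set v \<subseteq> {..?N} \<and> length v \<le> ?N}" by auto
  qed
qed (rule finite_lists_length_le, simp)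

lemma has_sum_erase_zeros:
  assumes "zero_excess c F"
  shows "(F has_sum erase_zeros c F u) {v. erase0 v = u}"
  unfolding erase_zeros_def
proof (rule has_sum_finite_neutralI[OF finite_zero_fibre])
  show "zero_fibre c u \<subseteq> {v. erase0 v = u}" by (auto simp: zero_fibre_def)
  show "F v = 0" if v: "v \<in> {v. erase0 v = u} - zero_fibre c u" for v
  proof (rule ccontr)
    assume "F v \<noteq> 0"
    then have "count_list v 0 = weight v + c" using assms by (simp add: zero_excess_def)
    with v show False by (auto simp: zero_fibre_def)
  qed
qed simp

lemma zero_excess_mult:
  assumes F: "zero_excess c1 F" and G: "zero_excess c2 G"
  shows "zero_excess (c1 + c2) (nc_mult F G)"
  unfolding zero_excess_def
proof (intro allI impI)
  fix v assume "nc_mult F G v \<noteq> 0"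
  then obtain i where "F (take i v) * G (drop i v) \<noteq> 0"
    unfolding nc_mult_def by (meson sum.not_neutral_contains_not_neutral)
  then have "F (take i v) \<noteq> 0" "G (drop i v) \<noteq> 0" by auto
  with F G have "count_list (take i v) 0 = weight (take i v) + c1"
    "count_list (drop i v) 0 = weight (drop i v) + c2"
    by (auto simp: zero_excess_def)
  then show "count_list v 0 = weight v + (c1 + c2)"
    using count_list_append[of "take i v" "drop i v" 0] sum_list_append[of "take i v" "drop i v"]
    by simp
qed

lemma zero_excess_nc_one: "zero_excess 0 nc_one"
  by (simp add: zero_excess_def nc_one_def)

lemma zero_excess_letter0: "zero_excess 1 (letter 0)"
  by (simp add: zero_excess_def letter_def)

lemma zero_excess_nc_pow: "zero_excess c F \<Longrightarrow> zero_excess (k * c) (nc_pow F k)"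
  by (induction k) (simp_all add: zero_excess_nc_one zero_excess_mult)

text \<open>Cutting a word of \<open>zero_fibre (c\<^sub>1 + c\<^sub>2) u\<close> into two pieces with excesses \<open>c\<^sub>1\<close> and
  \<open>c\<^sub>2\<close> amounts to cutting \<open>u\<close> and choosing a word in the fibre of each piece.\<close>

lemma sum_zero_fibre_split:
  "(\<Sum>(v, i) \<in> {(v, i) \<in> Sigma (zero_fibre (c1 + c2) u) (\<lambda>v. {..length v}).
        count_list (take i v) 0 = weight (take i v) + c1 \<and> count_list (drop i v) 0 = weight (drop i v) + c2}.
      f (take i v) (drop i v))
   = (\<Sum>(j, a, b) \<in> Sigma {..length u} (\<lambda>j. zero_fibre c1 (take j u) \<times> zero_fibre c2 (drop j u)). f a b)"
proof (rule sum.reindex_bij_witness[where j = "\<lambda>(v, i). (length (erase0 (take i v)), take i v, drop i v)"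
      and i = "\<lambda>(j, a, b). (a @ b, length a)"])
  fix p assume "p \<in> {(v, i) \<in> Sigma (zero_fibre (c1 + c2) u) (\<lambda>v. {..length v}).
    count_list (take i v) 0 = weight (take i v) + c1 \<and> count_list (drop i v) 0 = weight (drop i v) + c2}"
  then obtain v i where p: "p = (v, i)" "i \<le> length v" and v: "erase0 v = u"
    and zeros: "count_list (take i v) 0 = weight (take i v) + c1"
      "count_list (drop i v) 0 = weight (drop i v) + c2"
    by (auto simp: zero_fibre_def)
  have u: "erase0 (take i v) @ erase0 (drop i v) = u"
    using v by (metis append_take_drop_id erase0_append)
  let ?j = "length (erase0 (take i v))"
  have "take ?j u = erase0 (take i v)" "drop ?j u = erase0 (drop i v)" using u by auto
  with zeros u show "(\<lambda>(v, i). (length (erase0 (take i v)), take i v, drop i v)) p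
      \<in> Sigma {..length u} (\<lambda>j. zero_fibre c1 (take j u) \<times> zero_fibre c2 (drop j u))"
    by (auto simp: p zero_fibre_def)
  show "(\<lambda>(j, a, b). (a @ b, length a)) ((\<lambda>(v, i). (length (erase0 (take i v)), take i v, drop i v)) p) = p"
    using p by simp
next
  fix q assume "q \<in> Sigma {..length u} (\<lambda>j. zero_fibre c1 (take j u) \<times> zero_fibre c2 (drop j u))"
  then obtain j a b where q: "q = (j, a, b)" "j \<le> length u"
    and a: "erase0 a = take j u" "count_list a 0 = weight (take j u) + c1"
    and b: "erase0 b = drop j u" "count_list b 0 = weight (drop j u) + c2"
    by (auto simp: zero_fibre_def)
  have weights: "weight a = weight (take j u)" "weight b = weight (drop j u)"
    using a(1) b(1) weight_erase0 by metis+
  have "weight u = weight (take j u) + weight (drop j u)"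
    by (metis append_take_drop_id sum_list_append)
  with a b weights show "(\<lambda>(j, a, b). (a @ b, length a)) q
      \<in> {(v, i) \<in> Sigma (zero_fibre (c1 + c2) u) (\<lambda>v. {..length v}).
          count_list (take i v) 0 = weight (take i v) + c1 \<and> count_list (drop i v) 0 = weight (drop i v) + c2}"
    by (simp add: q zero_fibre_def)
  show "(\<lambda>(v, i). (length (erase0 (take i v)), take i v, drop i v)) ((\<lambda>(j, a, b). (a @ b, length a)) q) = q"
    using q a by simp
qed auto

lemma erase_zeros_mult:
  assumes F: "zero_excess c1 F" and G: "zero_excess c2 G"
  shows "erase_zeros (c1 + c2) (nc_mult F G) u = nc_mult (erase_zeros c1 F) (erase_zeros c2 G) u"
proof -
  define Z where "Z = Sigma (zero_fibre (c1 + c2) u) (\<lambda>v. {..length v})"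
  have "erase_zeros (c1 + c2) (nc_mult F G) u = (\<Sum>(v, i)\<in>Z. F (take i v) * G (drop i v))"
    unfolding erase_zeros_def nc_mult_def Z_def by (rule sum.Sigma) (auto simp: finite_zero_fibre)
  also have "\<dots> = (\<Sum>(v, i) \<in> {(v, i) \<in> Z. count_list (take i v) 0 = weight (take i v) + c1
      \<and> count_list (drop i v) 0 = weight (drop i v) + c2}. F (take i v) * G (drop i v))"
    by (rule sum.mono_neutral_right)
      (use F G in \<open>auto simp: Z_def finite_zero_fibre zero_excess_def\<close>)
  also have "\<dots> = (\<Sum>(j, a, b) \<in> Sigma {..length u} (\<lambda>j. zero_fibre c1 (take j u) \<times> zero_fibre c2 (drop j u)).
      F a * G b)"
    unfolding Z_def by (rule sum_zero_fibre_split)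
  also have "\<dots> = nc_mult (erase_zeros c1 F) (erase_zeros c2 G) u"
    unfolding nc_mult_def erase_zeros_def sum_product sum.cartesian_product
    by (rule sum.Sigma[symmetric]) (auto simp: finite_zero_fibre)
  finally show ?thesis .
qed

lemma erase_zeros_nc_pow:
  "zero_excess c F \<Longrightarrow> erase_zeros (k * c) (nc_pow F k) = nc_pow (erase_zeros c F) k"
proof (induction k)
  case 0
  have "erase_zeros 0 nc_one u = nc_one u" for u
  proof -
    have "erase_zeros 0 nc_one u = (if [] \<in> zero_fibre 0 u then 1 else 0)"
      by (simp add: erase_zeros_def nc_one_def finite_zero_fibre)
    then show ?thesis by (auto simp: zero_fibre_def nc_one_def)
  qed
  then show ?case by (simp add: fun_eq_iff)
next
  case (Suc k)
  have "erase_zeros (c + k * c) (nc_mult F (nc_pow F k))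
      = nc_mult (erase_zeros c F) (erase_zeros (k * c) (nc_pow F k))"
    using erase_zeros_mult[OF Suc.prems zero_excess_nc_pow[OF Suc.prems]] by (simp add: fun_eq_iff)
  with Suc.IH[OF Suc.prems] show ?case by simp
qed

lemma erase_zeros_letter0: "erase_zeros 1 (letter 0) = nc_one"
proof
  fix u :: "nat list"
  have "erase_zeros 1 (letter 0) u = (if [0] \<in> zero_fibre 1 u then 1 else 0)"
    by (simp add: erase_zeros_def letter_def finite_zero_fibre)
  then show "erase_zeros 1 (letter 0) u = nc_one u"
    by (auto simp: zero_fibre_def nc_one_def erase0_def)
qed

lemma erase_zeros_Nil: "erase_zeros c F [] = F (replicate c 0)"
proof -
  have "count_list (replicate c 0) 0 = c" by (induction c) auto
  then have "zero_fibre c [] = {replicate c 0}"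
    by (auto simp: zero_fibre_def erase0_eq_Nil) (simp add: erase0_def)
  then show ?thesis by (simp add: erase_zeros_def)
qed

lemma erase_zeros_uminus: "erase_zeros c (\<lambda>v. - F v) u = - erase_zeros c F u"
  by (simp add: erase_zeros_def sum_negf)

lemma erase_zeros_zero_mem: "0 \<in> set u \<Longrightarrow> erase_zeros c F u = 0"
proof -
  assume "0 \<in> set u"
  then have "zero_fibre c u = {}" using zero_notin_erase0 by (auto simp: zero_fibre_def)
  then show ?thesis by (simp add: erase_zeros_def)
qed

lemma erase_zeros_Cons:
  assumes F: "\<And>v. v \<noteq> [] \<Longrightarrow> F (0 # v) = 0" and m: "m \<ge> 1"
  shows "erase_zeros c F (m # u) = erase_zeros (c + m) (\<lambda>v. F (m # v)) u"
proof -
  have sub: "(#) m ` zero_fibre (c + m) u \<subseteq> zero_fibre c (m # u)"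
    using m by (auto simp: zero_fibre_def erase0_Cons)
  have "erase_zeros c F (m # u) = sum F ((#) m ` zero_fibre (c + m) u)"
    unfolding erase_zeros_def
  proof (rule sum.mono_neutral_right[OF finite_zero_fibre sub])
    show "\<forall>x\<in>zero_fibre c (m # u) - (#) m ` zero_fibre (c + m) u. F x = 0"
    proof
      fix x assume x: "x \<in> zero_fibre c (m # u) - (#) m ` zero_fibre (c + m) u"
      then have x_fibre: "erase0 x = m # u" "count_list x 0 = weight (m # u) + c"
        by (auto simp: zero_fibre_def)
      then obtain y v where xv: "x = y # v" by (cases x) auto
      show "F x = 0"
      proof (cases "y = 0")
        case True
        then have "v \<noteq> []" using x_fibre xv by (auto simp: erase0_Cons)
        with F xv True show ?thesis by simp
      next
        case False
        then have "v \<in> zero_fibre (c + m) u" "y = m"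
          using x_fibre xv by (auto simp: zero_fibre_def erase0_Cons)
        with x xv show ?thesis by blast
      qed
    qed
  qed
  also have "\<dots> = erase_zeros (c + m) (\<lambda>v. F (m # v)) u"
    by (simp add: erase_zeros_def sum.reindex)
  finally show ?thesis .
qed

section \<open>The family \<open>K\<^sub>n\<close>\<close>

lemma sigma1_Nil [simp]: "sigma1 [] = 1"
  by (simp add: sigma1_def)

lemma sigma1_0Cons [simp]: "sigma1 (0 # u) = 0"
  by (simp add: sigma1_def)

lemma sigma1_Cons: "m \<ge> 1 \<Longrightarrow> sigma1 (m # v) = nc_one v"
  by (auto simp: sigma1_def nc_one_def)

lemma nc_pow_Suc_Cons:
  assumes h0: "h [] = 1" and h: "\<And>m u. m \<ge> 1 \<Longrightarrow> h (m # u) = - nc_pow h (Suc m) u"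
    and m: "m \<ge> 1"
  shows "nc_pow h (Suc j) (m # p) = nc_pow h j (m # p) - nc_pow h (m + Suc j) p"
proof -
  have "nc_pow h (Suc j) (m # p) = nc_pow h j (m # p) + nc_mult (\<lambda>u. - nc_pow h (Suc m) u) (nc_pow h j) p"
    using h0 h[OF m] by (simp add: nc_mult_Cons)
  also have "nc_mult (\<lambda>u. - nc_pow h (Suc m) u) (nc_pow h j) p = - nc_pow h (m + Suc j) p"
    using nc_pow_add[of h "Suc m" j] by (simp add: nc_mult_uminus_left)
  finally show ?thesis by simp
qed

lemma nc_mult_dep_sigma1_Suc:
  assumes "\<And>l. l \<le> length w \<Longrightarrow>
    nc_mult_dep F (\<lambda>p. nc_pow sigma1 (weight p + j)) (take l w) = nc_one (take l w)"
  shows "nc_mult_dep F (\<lambda>p. nc_pow sigma1 (weight p + Suc j)) w = sigma1 w"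
proof -
  have "nc_mult_dep F (\<lambda>p. nc_pow sigma1 (weight p + Suc j)) w
      = nc_mult (nc_mult_dep F (\<lambda>p. nc_pow sigma1 (weight p + j))) sigma1 w"
    by (simp add: nc_pow_Suc' nc_mult_dep_mult_right[symmetric] del: nc_pow.simps)
  also have "\<dots> = nc_mult nc_one sigma1 w"
    by (rule nc_mult_cong_prefix) (rule assms)
  finally show ?thesis by simp
qed

text \<open>\<open>nc_mult_dep F (\<lambda>p. nc_pow sigma1 (weight p))\<close> is \<open>F(\<sigma>\<^sub>1) = \<Sum>\<^sub>n F\<^sub>n \<sigma>\<^sub>1\<^sup>n\<close> for
  the homogeneous components \<open>F\<^sub>n\<close> of \<open>F\<close>; so this says \<open>h\<^sup>j(\<sigma>\<^sub>1) \<sigma>\<^sub>1\<^sup>j = 1\<close>.\<close>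

lemma nc_mult_dep_pow_sigma1:
  assumes h0: "h [] = 1" and hz: "\<And>u. h (0 # u) = 0"
    and h: "\<And>m u. m \<ge> 1 \<Longrightarrow> h (m # u) = - nc_pow h (Suc m) u"
  shows "nc_mult_dep (nc_pow h j) (\<lambda>p. nc_pow sigma1 (weight p + j)) w = nc_one w"
proof (induction "length w" arbitrary: w j rule: less_induct)
  case less
  have h_pow_Nil: "nc_pow h n [] = 1" for n by (rule nc_pow_Nil[of h, OF h0])
  have sigma1_pow_Nil: "nc_pow sigma1 n [] = 1" for n by (simp add: nc_pow_Nil)
  show ?case
  proof (induction j)
    case (Suc j)
    show ?case
    proof (cases w)
      case Nil
      then show ?thesis using h_pow_Nil sigma1_pow_Nil by (simp add: nc_one_def del: nc_pow.simps)
    next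
      case (Cons c v)
      show ?thesis
      proof (cases "c = 0")
        case True
        then show ?thesis
          using Cons nc_pow_0Cons[of h, OF hz] nc_pow_0Cons[of sigma1]
          by (simp add: nc_mult_dep_Cons nc_mult_dep_zero_left nc_one_def del: nc_pow.simps)
      next
        case False
        then have c: "c \<ge> 1" by simp
        let ?Q = "\<lambda>u. nc_pow sigma1 (weight (c # u) + Suc j)"
        have shorter: "nc_mult_dep (nc_pow h (c + Suc j)) ?Q v = nc_one v"
          using less[of v "c + Suc j"] Cons by (simp add: add_ac cong: nc_mult_dep_cong)
        have "nc_mult_dep (nc_pow h j) (\<lambda>p. nc_pow sigma1 (weight p + Suc j)) w = sigma1 w"
        proof (rule nc_mult_dep_sigma1_Suc)
          fix l assume "l \<le> length w"
          then show "nc_mult_dep (nc_pow h j) (\<lambda>p. nc_pow sigma1 (weight p + j)) (take l w) = nc_one (take l w)"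
            using Suc.IH less[of "take l w"] by (cases "l < length w") auto
        qed
        then have longer: "nc_pow sigma1 (Suc j) w + nc_mult_dep (\<lambda>u. nc_pow h j (c # u)) ?Q v = sigma1 w"
          using Cons h_pow_Nil by (simp add: nc_mult_dep_Cons del: nc_pow.simps)
        have "nc_mult_dep (nc_pow h (Suc j)) (\<lambda>p. nc_pow sigma1 (weight p + Suc j)) w
            = nc_pow sigma1 (Suc j) w + nc_mult_dep (\<lambda>u. nc_pow h j (c # u)) ?Q v
              - nc_mult_dep (nc_pow h (c + Suc j)) ?Q v"
          using Cons h_pow_Nil[of "Suc j"] nc_pow_Suc_Cons[OF h0 h c]
          by (simp add: nc_mult_dep_Cons nc_mult_dep_diff_left del: nc_pow.simps)
        also have "\<dots> = 0" using longer shorter c Cons by (simp add: sigma1_Cons)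
        finally show ?thesis using Cons by (simp add: nc_one_def)
      qed
    qed
  qed (simp add: nc_mult_dep_one_left)
qed

lemma sigma1_eq_nc_mult_dep:
  assumes h0: "h [] = 1" and hz: "\<And>u. h (0 # u) = 0"
    and h: "\<And>m u. m \<ge> 1 \<Longrightarrow> h (m # u) = - nc_pow h (Suc m) u"
    and k0: "k [] = 1" and kz: "\<And>u. k (0 # u) = 0" and k: "\<And>m u. m \<ge> 1 \<Longrightarrow> k (m # u) = nc_pow h m u"
  shows "sigma1 w = nc_mult_dep k (\<lambda>p. nc_pow sigma1 (weight p)) w"
proof (cases w)
  case (Cons c v)
  show ?thesis
  proof (cases "c = 0")
    case True
    then show ?thesis using Cons kz k0 by (simp add: nc_mult_dep_Cons nc_mult_dep_zero_left nc_one_def)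
  next
    case False
    then have c: "c \<ge> 1" by simp
    have "nc_mult_dep k (\<lambda>p. nc_pow sigma1 (weight p)) (c # v)
        = k [] * nc_one (c # v) + nc_mult_dep (\<lambda>u. k (c # u)) (\<lambda>u. nc_pow sigma1 (weight (c # u))) v"
      by (simp add: nc_mult_dep_Cons)
    also have "\<dots> = nc_mult_dep (nc_pow h c) (\<lambda>p. nc_pow sigma1 (weight p + c)) v"
      using k[OF c] by (simp add: nc_one_def add.commute cong: nc_mult_dep_cong)
    finally have "nc_mult_dep k (\<lambda>p. nc_pow sigma1 (weight p)) w
        = nc_mult_dep (nc_pow h c) (\<lambda>p. nc_pow sigma1 (weight p + c)) v"
      using Cons by simp
    also have "\<dots> = nc_one v" by (rule nc_mult_dep_pow_sigma1[OF h0 hz h])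
    finally show ?thesis using Cons c by (simp add: sigma1_Cons)
  qed
qed (simp add: k0 nc_one_def)

lemma weight_eq_0_Cons: "weight u = 0 \<Longrightarrow> u \<noteq> [] \<Longrightarrow> \<exists>u'. u = 0 # u'"
  by (cases u) auto

lemma is_K_family_diagonal:
  assumes K: "is_K_family K" and w: "weight w = n"
  shows "nc_mult (K n) (nc_pow sigma1 n) w = K n w"
proof -
  have "nc_mult (K n) (nc_pow sigma1 n) w = K n (take (length w) w) * nc_pow sigma1 n (drop (length w) w)"
    unfolding nc_mult_def
  proof (rule sum_eq_single)
    fix i assume i: "i \<in> {..length w}" "i \<noteq> length w"
    show "K n (take i w) * nc_pow sigma1 n (drop i w) = 0"
    proof (cases "K n (take i w) = 0")
      case False
      then have "weight (take i w) = n" using K by (auto simp: is_K_family_def)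
      then have "weight (drop i w) = 0" using w by (metis add_left_cancel append_take_drop_id add_0_right sum_list_append)
      moreover have "drop i w \<noteq> []" using i by simp
      ultimately obtain u' where "drop i w = 0 # u'" using weight_eq_0_Cons by blast
      then show ?thesis by (simp add: nc_pow_0Cons)
    qed simp
  qed auto
  then show ?thesis by (simp add: nc_pow_Nil)
qed

lemma K_family_unique:
  assumes K1: "is_K_family K1" and K2: "is_K_family K2"
  shows "K1 = K2"
proof (intro ext)
  fix n w
  show "K1 n w = K2 n w"
  proof (induction n arbitrary: w rule: less_induct)
    case (less n)
    show ?case
    proof (cases "weight w = n")
      case True
      have split: "sigma1 w = (\<Sum>m<n. nc_mult (K m) (nc_pow sigma1 m) w) + K n w"
        if "is_K_family K" for K
        using that True is_K_family_diagonal[OF that True]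
        by (simp add: is_K_family_def lessThan_Suc_atMost[symmetric])
      have "(\<Sum>m<n. nc_mult (K1 m) (nc_pow sigma1 m) w) = (\<Sum>m<n. nc_mult (K2 m) (nc_pow sigma1 m) w)"
        using less by (intro sum.cong) (auto intro!: arg_cong[where f = "\<lambda>F. nc_mult F _ w"] ext)
      then show ?thesis using split[OF K1] split[OF K2] by simp
    next
      case False
      then have "K1 n w = 0" "K2 n w = 0" using K1 K2 unfolding is_K_family_def by blast+
      then show ?thesis by simp
    qed
  qed
qed

lemma K_series_eqI:
  assumes k0: "k [] = 1" and kz: "\<And>w. 0 \<in> set w \<Longrightarrow> k w = 0"
    and k: "\<And>w. sigma1 w = nc_mult_dep k (\<lambda>p. nc_pow sigma1 (weight p)) w"
  shows "K_series = k"
proof -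
  define Kf where "Kf n w = (if weight w = n then k w else 0)" for n w
  have "is_K_family Kf"
    unfolding is_K_family_def
  proof (intro conjI allI impI)
    show "Kf 0 = nc_one"
    proof
      fix w :: "nat list"
      show "Kf 0 w = nc_one w"
        using k0 kz weight_eq_0_Cons[of w] by (auto simp: Kf_def nc_one_def)
    qed
  next
    fix n w assume "Kf n w \<noteq> 0"
    then show "weight w = n" by (auto simp: Kf_def split: if_splits)
  next
    fix n w assume "Kf n w \<noteq> 0"
    then show "0 \<notin> set w" using kz by (auto simp: Kf_def split: if_splits)
  next
    fix w :: "nat list"
    have "(\<Sum>n\<le>weight w. nc_mult (Kf n) (nc_pow sigma1 n) w)
        = (\<Sum>i\<le>length w. \<Sum>n\<le>weight w. Kf n (take i w) * nc_pow sigma1 n (drop i w))"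
      unfolding nc_mult_def by (rule sum.swap)
    also have "\<dots> = (\<Sum>i\<le>length w. k (take i w) * nc_pow sigma1 (weight (take i w)) (drop i w))"
    proof (rule sum.cong[OF refl])
      fix i
      have "weight (take i w) \<le> weight w"
        by (metis append_take_drop_id le_add1 sum_list_append)
      then show "(\<Sum>n\<le>weight w. Kf n (take i w) * nc_pow sigma1 n (drop i w))
          = k (take i w) * nc_pow sigma1 (weight (take i w)) (drop i w)"
        by (simp add: Kf_def if_distrib[where f = "\<lambda>x. x * _"] sum.delta cong: if_cong)
    qed
    also have "\<dots> = sigma1 w" by (simp add: k nc_mult_dep_def)
    finally show "sigma1 w = (\<Sum>n\<le>weight w. nc_mult (Kf n) (nc_pow sigma1 n) w)" by simp
  qed
  then have "K_fam = Kf"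
    unfolding K_fam_def using K_family_unique by blast
  then show ?thesis by (simp add: fun_eq_iff K_series_def Kf_def)
qed

section \<open>The image of \<open>\<kappa>\<close> under \<open>S\<^sub>0 \<mapsto> 1\<close>\<close>

context fc_inverse_kappa
begin

lemma zero_excess_g: "zero_excess 1 g"
  using tree_supported_g count_zeros_tword by (force simp: zero_excess_def tree_supported_def)

lemma zero_excess_eta: "zero_excess 0 eta"
  unfolding zero_excess_def
proof (intro allI impI)
  fix v assume "eta v \<noteq> 0"
  then have "g (v @ [0]) \<noteq> 0" by (simp add: eta_snoc)
  with zero_excess_g have "count_list (v @ [0]) 0 = weight (v @ [0]) + 1"
    unfolding zero_excess_def by blast
  then show "count_list v 0 = weight v + 0" by simp
qed

lemma zero_excess_eta_inv: "zero_excess 0 eta_inv"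
  unfolding zero_excess_def
proof (intro allI impI)
  fix w assume nz: "eta_inv w \<noteq> 0"
  show "count_list w 0 = weight w + 0"
  proof (cases w)
    case (Cons m v)
    with nz have "m \<ge> 1" "nc_pow g m v \<noteq> 0" by (auto simp: eta_inv_eq split: if_splits)
    with zero_excess_nc_pow[OF zero_excess_g, of m] Cons show ?thesis
      by (auto simp: zero_excess_def)
  qed simp
qed

lemma zero_excess_kappa: "zero_excess 1 kappa"
  using zero_excess_mult[OF zero_excess_eta_inv zero_excess_letter0] by (simp add: kappa_eq)

lemma kappa_0Cons: "v \<noteq> [] \<Longrightarrow> kappa (0 # v) = 0"
  by (simp add: kappa_eq nc_mult_Cons eta_inv_0Cons nc_mult_zero_left letter_def)

lemma kappa_Cons: "m \<ge> 1 \<Longrightarrow> kappa (m # v) = nc_mult (nc_pow g m) (letter 0) v"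
  by (simp add: kappa_eq nc_mult_Cons eta_inv_Cons letter_def)

lemma erase_zeros_pow_g: "erase_zeros m (nc_pow g m) = nc_pow (erase_zeros 0 eta) m"
proof -
  have "erase_zeros 1 g = nc_mult (erase_zeros 0 eta) (erase_zeros 1 (letter 0))"
    using erase_zeros_mult[OF zero_excess_eta zero_excess_letter0] by (simp add: g_eq fun_eq_iff)
  then have "erase_zeros 1 g = erase_zeros 0 eta"
    by (simp only: erase_zeros_letter0 nc_mult_one)
  then show ?thesis using erase_zeros_nc_pow[OF zero_excess_g, of m] by simp
qed

lemma erase_zeros_eta_Cons:
  assumes m: "m \<ge> 1"
  shows "erase_zeros 0 eta (m # u) = - nc_pow (erase_zeros 0 eta) (Suc m) u"
proof -
  have "erase_zeros 0 eta (m # u) = erase_zeros (m + 0) (\<lambda>v. - nc_mult (nc_pow g m) eta v) u"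
    using erase_zeros_Cons[of eta, OF _ m] eta_0Cons eta_Cons[OF m] by simp
  also have "\<dots> = - nc_mult (erase_zeros m (nc_pow g m)) (erase_zeros 0 eta) u"
    using erase_zeros_mult[OF zero_excess_nc_pow[OF zero_excess_g] zero_excess_eta, of m]
    by (simp add: erase_zeros_uminus)
  finally show ?thesis by (simp only: erase_zeros_pow_g nc_pow_Suc')
qed

lemma erase_zeros_kappa_Cons:
  assumes m: "m \<ge> 1"
  shows "erase_zeros 1 kappa (m # u) = nc_pow (erase_zeros 0 eta) m u"
proof -
  have "erase_zeros 1 kappa (m # u) = erase_zeros (m + 1) (nc_mult (nc_pow g m) (letter 0)) u"
    using erase_zeros_Cons[of kappa, OF kappa_0Cons m] kappa_Cons[OF m] by (simp add: add.commute)
  also have "\<dots> = nc_mult (erase_zeros m (nc_pow g m)) (erase_zeros 1 (letter 0)) u"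
    using erase_zeros_mult[OF zero_excess_nc_pow[OF zero_excess_g] zero_excess_letter0, of m] by simp
  finally show ?thesis by (simp only: erase_zeros_pow_g erase_zeros_letter0 nc_mult_one)
qed

lemma K_series_eq_erase_zeros_kappa: "K_series = erase_zeros 1 kappa"
proof -
  have h0: "erase_zeros 0 eta [] = 1" by (simp add: erase_zeros_Nil eta_Nil)
  have k0: "erase_zeros 1 kappa [] = 1"
    by (simp add: erase_zeros_Nil kappa_eq_prime_tree_series prime_tree_series_single)
  have zero: "erase_zeros c F (0 # u) = 0" for c F u by (simp add: erase_zeros_zero_mem)
  show ?thesis
    by (rule K_series_eqI[OF k0 erase_zeros_zero_mem sigma1_eq_nc_mult_dep[OF h0 zero
          erase_zeros_eta_Cons k0 zero erase_zeros_kappa_Cons]])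
qed

end

theorem mainTheorem2:
  fixes g eta eta_inv kappa :: ncs
  assumes g_grp: "g \<in> schroder_group"
      and g_inv: "schroder_comp f_c g = letter 0" "schroder_comp g f_c = letter 0"
      and eta: "g = nc_mult eta (letter 0)"
      and eta_inv: "nc_mult eta eta_inv = nc_one" "nc_mult eta_inv eta = nc_one"
      and kappa: "kappa = nc_mult eta_inv (letter 0)"
  shows "(\<forall>u. (kappa has_sum K_series u) {v. erase0 v = u})
       \<and> (\<forall>n\<ge>1. \<forall>w. weight w = n \<longrightarrow>
            kappa w = (\<Sum>t\<in>PST n. if tword t = w then (-1) ^ (internal t - 1) else 0))"
proof -
  txt \<open>Only the one-sided inverse relations are needed.\<close>
  interpret fc_inverse_kappa g eta eta_inv kappa
    using g_grp g_inv(1) eta eta_inv(2) kappa by unfold_locales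
  have "(kappa has_sum K_series u) {v. erase0 v = u}" for u
    unfolding K_series_eq_erase_zeros_kappa by (rule has_sum_erase_zeros[OF zero_excess_kappa])
  with kappa_weight show ?thesis by blast
qed

end
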